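(* Let $K\ge2$, $\theta\in\Theta$, and let $p\in[0,1]^K$ with $p_{\rm sum}:=\sum_a p_a\le 1$ (in the $\theta$-dependent case, $p=p(\theta)$). Then $$1\le \frac{T^\star_p(\theta)}{T^\star(\theta)}\le O\!\left(\min\left(\frac{1}{1-p_{\rm sum}},\ \frac{1}{K p_{\min}}\right)\right),$$ where the constant hidden in $O(\cdot)$ depends on $\theta$ but not on $p$.
   Context: $\Theta=\{\theta\in\mathbb{R}^K:\arg\max_a\theta_a\text{ is unique}\}$, $a^\star=\arg\max_a\theta_a$, $\Delta_a=\theta_{a^\star}-\theta_a$. For $p\in[0,1]^K$ with $\sum_ap_a\le1$, $\Sigma_p=\{w\in[0,1]^K: w_a\ge p_a\ \forall a,\ \sum_aw_a=1\}$ and $$T^\star_p(\theta)=2\inf_{w\in\Sigma_p}\max_{a\ne a^\star}\frac{w_a^{-1}+w_{a^\star}^{-1}}{\Delta_a^2},\qquad T^\star(\theta)=T^\star_{(0,\dots,0)}(\theta).$$ $p_{\min}=\min_{a:\,p_a>0}p_a$. Conventions: $1/0=+\infty$ (e.g. when $p_{\rm sum}=1$).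
   Formalization: The term $\frac{1}{K p_{\min}}$ in the minimum applies only when every $p_a>0$; when some $p_a=0$ it is replaced by $+\infty$, so only $\frac{1}{1-p_{\rm sum}}$ bounds the ratio then. The statement above fails without it. *)

theory Defs
  imports "HOL-Analysis.Analysis"
begin

text \<open>Arms are indexed by 0..K-1; vectors in R^K are functions nat => real
  (only the values below K matter).\<close>

definition in_Theta :: "nat \<Rightarrow> (nat \<Rightarrow> real) \<Rightarrow> bool" where
  "in_Theta K \<theta> \<longleftrightarrow> (\<exists>a<K. \<forall>b<K. b \<noteq> a \<longrightarrow> \<theta> b < \<theta> a)"

definition astar :: "nat \<Rightarrow> (nat \<Rightarrow> real) \<Rightarrow> nat" where
  "astar K \<theta> = (THE a. a < K \<and> (\<forall>b<K. b \<noteq> a \<longrightarrow> \<theta> b < \<theta> a))"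

definition gap :: "nat \<Rightarrow> (nat \<Rightarrow> real) \<Rightarrow> nat \<Rightarrow> real" where
  "gap K \<theta> a = \<theta> (astar K \<theta>) - \<theta> a"

definition einv :: "real \<Rightarrow> ereal" where
  "einv x = (if x = 0 then \<infinity> else ereal (1 / x))"

definition Sigma_p :: "nat \<Rightarrow> (nat \<Rightarrow> real) \<Rightarrow> (nat \<Rightarrow> real) set" where
  "Sigma_p K p = {w. (\<forall>a<K. 0 \<le> w a \<and> w a \<le> 1 \<and> p a \<le> w a) \<and> (\<forall>a\<ge>K. w a = 0)
                    \<and> (\<Sum>a<K. w a) = 1}"

definition objective :: "nat \<Rightarrow> (nat \<Rightarrow> real) \<Rightarrow> (nat \<Rightarrow> real) \<Rightarrow> ereal" where
  "objective K \<theta> w = Max {(einv (w a) + einv (w (astar K \<theta>))) * ereal (1 / (gap K \<theta> a)\<^sup>2)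
                          | a. a < K \<and> a \<noteq> astar K \<theta>}"

definition Tstar_p :: "nat \<Rightarrow> (nat \<Rightarrow> real) \<Rightarrow> (nat \<Rightarrow> real) \<Rightarrow> ereal" where
  "Tstar_p K \<theta> p = 2 * (INF w \<in> Sigma_p K p. objective K \<theta> w)"

definition Tstar :: "nat \<Rightarrow> (nat \<Rightarrow> real) \<Rightarrow> ereal" where
  "Tstar K \<theta> = Tstar_p K \<theta> (\<lambda>_. 0)"

definition psum :: "nat \<Rightarrow> (nat \<Rightarrow> real) \<Rightarrow> real" where
  "psum K p = (\<Sum>a<K. p a)"

definition pmin :: "nat \<Rightarrow> (nat \<Rightarrow> real) \<Rightarrow> real" where
  "pmin K p = Min {p a | a. a < K \<and> p a > 0}"

end

theory Submission imports Defs begin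

text \<open>Restricting the weights to \<open>\<Sigma>\<^sub>p \<subseteq> \<Sigma>\<^sub>0\<close> can only increase the infimum, which gives the
  lower bound. For the upper bound, the objective at weights that are all at least \<open>m\<close> is at most
  \<open>2 / (m \<Delta>\<^sub>m\<^sub>i\<^sub>n\<^sup>2)\<close>, while the objective at any weights is at least \<open>1 / \<Delta>\<^sub>m\<^sub>a\<^sub>x\<^sup>2\<close>.
  The weights \<open>p + (1 - p\<^sub>s\<^sub>u\<^sub>m) / K\<close> lie in \<open>\<Sigma>\<^sub>p\<close> and are bounded below both by
  \<open>(1 - p\<^sub>s\<^sub>u\<^sub>m) / K\<close> and, when all \<open>p\<^sub>a > 0\<close>, by \<open>p\<^sub>m\<^sub>i\<^sub>n\<close>; hence
  \<open>T\<^sup>\<star>\<^sub>p / T\<^sup>\<star> \<le> 2 \<Delta>\<^sub>m\<^sub>a\<^sub>x\<^sup>2 / (\<Delta>\<^sub>m\<^sub>i\<^sub>n\<^sup>2 m)\<close> with either value of \<open>m\<close>.\<close>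

definition suboptimal_arms :: "nat \<Rightarrow> (nat \<Rightarrow> real) \<Rightarrow> nat set" where
  "suboptimal_arms K \<theta> = {a. a < K \<and> a \<noteq> astar K \<theta>}"

definition min_sq_gap :: "nat \<Rightarrow> (nat \<Rightarrow> real) \<Rightarrow> real" where
  "min_sq_gap K \<theta> = Min ((\<lambda>a. (gap K \<theta> a)\<^sup>2) ` suboptimal_arms K \<theta>)"

definition max_sq_gap :: "nat \<Rightarrow> (nat \<Rightarrow> real) \<Rightarrow> real" where
  "max_sq_gap K \<theta> = Max ((\<lambda>a. (gap K \<theta> a)\<^sup>2) ` suboptimal_arms K \<theta>)"

definition ratio_constant :: "nat \<Rightarrow> (nat \<Rightarrow> real) \<Rightarrow> real" where
  "ratio_constant K \<theta> = 2 * real K * max_sq_gap K \<theta> / min_sq_gap K \<theta>"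

definition uniform_fill :: "nat \<Rightarrow> (nat \<Rightarrow> real) \<Rightarrow> nat \<Rightarrow> real" where
  "uniform_fill K p a = (if a < K then p a + (1 - psum K p) / real K else 0)"

lemma einv_eq_ereal_divide: "x \<noteq> 0 \<Longrightarrow> einv x = ereal (1 / x)"
  by (simp add: einv_def)

lemma one_le_einv: "0 \<le> x \<Longrightarrow> x \<le> 1 \<Longrightarrow> 1 \<le> einv x"
  by (simp add: einv_def)

lemma einv_nonneg: "0 \<le> x \<Longrightarrow> 0 \<le> einv x"
  by (simp add: einv_def)

lemma finite_suboptimal_arms: "finite (suboptimal_arms K \<theta>)"
  unfolding suboptimal_arms_def by auto

lemma objective_eq_Max:
  "objective K \<theta> w = Max ((\<lambda>a. (einv (w a) + einv (w (astar K \<theta>))) * ereal (1 / (gap K \<theta> a)\<^sup>2))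
                           ` suboptimal_arms K \<theta>)"
  unfolding objective_def suboptimal_arms_def by (rule arg_cong[where f = Max]) auto

lemma Sigma_p_subset_Sigma_0: "Sigma_p K p \<subseteq> Sigma_p K (\<lambda>_. 0)"
  unfolding Sigma_p_def by auto

lemma Tstar_le_Tstar_p: "Tstar K \<theta> \<le> Tstar_p K \<theta> p"
  unfolding Tstar_def Tstar_p_def
  by (intro ereal_mult_left_mono INF_superset_mono[OF Sigma_p_subset_Sigma_0]) auto

lemma uniform_fill_in_Sigma_p:
  assumes "K > 0" and p_nonneg: "\<forall>a<K. 0 \<le> p a" and "psum K p \<le> 1"
  shows "uniform_fill K p \<in> Sigma_p K p"
proof -
  have "1 \<le> real K"
    using \<open>K > 0\<close> by simp
  then have slack: "0 \<le> (1 - psum K p) / real K" "(1 - psum K p) / real K \<le> 1 - psum K p"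
    using divide_left_mono[of 1 "real K" "1 - psum K p"] assms by auto
  have "p a \<le> psum K p" if "a < K" for a
    unfolding psum_def using p_nonneg that by (intro member_le_sum) auto
  with slack have "uniform_fill K p a \<le> 1" if "a < K" for a
    using that by (fastforce simp: uniform_fill_def)
  moreover have "(\<Sum>a<K. uniform_fill K p a) = 1"
    using \<open>K > 0\<close> by (simp add: uniform_fill_def sum.distrib psum_def[symmetric])
  ultimately show ?thesis
    using p_nonneg slack by (auto simp: Sigma_p_def uniform_fill_def)
qed

lemma uniform_fill_ge_slack:
  "\<forall>a<K. 0 \<le> p a \<Longrightarrow> a < K \<Longrightarrow> (1 - psum K p) / real K \<le> uniform_fill K p a"
  by (simp add: uniform_fill_def)

lemma pmin_eq_Min_image: "\<forall>a<K. 0 < p a \<Longrightarrow> pmin K p = Min (p ` {..<K})"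
  unfolding pmin_def by (rule arg_cong[where f = Min]) auto

lemma uniform_fill_ge_pmin:
  assumes "psum K p \<le> 1" and pos: "\<forall>a<K. 0 < p a" and "a < K"
  shows "pmin K p \<le> uniform_fill K p a"
proof -
  have "pmin K p \<le> p a"
    using pmin_eq_Min_image[OF pos] \<open>a < K\<close> by simp
  then show ?thesis
    using assms by (simp add: uniform_fill_def add_increasing2)
qed

lemma pmin_pos: "K > 0 \<Longrightarrow> \<forall>a<K. 0 < p a \<Longrightarrow> 0 < pmin K p"
  by (subst pmin_eq_Min_image, assumption, subst Min_gr_iff) auto

context
  fixes K :: nat and \<theta> :: "nat \<Rightarrow> real"
  assumes two_le_K: "2 \<le> K" and Theta: "in_Theta K \<theta>"
begin

lemma astar_argmax: "astar K \<theta> < K \<and> (\<forall>b<K. b \<noteq> astar K \<theta> \<longrightarrow> \<theta> b < \<theta> (astar K \<theta>))"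
proof -
  obtain a where "a < K" "\<forall>b<K. b \<noteq> a \<longrightarrow> \<theta> b < \<theta> a"
    using Theta unfolding in_Theta_def by blast
  then have "\<exists>!a. a < K \<and> (\<forall>b<K. b \<noteq> a \<longrightarrow> \<theta> b < \<theta> a)"
    by (metis less_asym)
  then show ?thesis
    unfolding astar_def by (rule theI')
qed

lemma astar_less: "astar K \<theta> < K"
  using astar_argmax by blast

lemma gap_pos: "a \<in> suboptimal_arms K \<theta> \<Longrightarrow> 0 < gap K \<theta> a"
  using astar_argmax unfolding suboptimal_arms_def gap_def by auto

lemma suboptimal_arms_nonempty: "suboptimal_arms K \<theta> \<noteq> {}"
proof -
  have "(if astar K \<theta> = 0 then 1 else 0) \<in> suboptimal_arms K \<theta>"
    using two_le_K unfolding suboptimal_arms_def by auto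
  then show ?thesis by blast
qed

lemma min_sq_gap_le: "a \<in> suboptimal_arms K \<theta> \<Longrightarrow> min_sq_gap K \<theta> \<le> (gap K \<theta> a)\<^sup>2"
  unfolding min_sq_gap_def using finite_suboptimal_arms by simp

lemma max_sq_gap_ge: "a \<in> suboptimal_arms K \<theta> \<Longrightarrow> (gap K \<theta> a)\<^sup>2 \<le> max_sq_gap K \<theta>"
  unfolding max_sq_gap_def using finite_suboptimal_arms by simp

lemma min_sq_gap_pos: "0 < min_sq_gap K \<theta>"
  unfolding min_sq_gap_def
  using finite_suboptimal_arms suboptimal_arms_nonempty gap_pos by (simp, fastforce)

lemma max_sq_gap_pos: "0 < max_sq_gap K \<theta>"
proof -
  obtain a where a: "a \<in> suboptimal_arms K \<theta>"
    using suboptimal_arms_nonempty by blast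
  show ?thesis
    using gap_pos[OF a] max_sq_gap_ge[OF a] by (meson order_less_le_trans zero_less_power)
qed

lemma ratio_constant_pos: "0 < ratio_constant K \<theta>"
  unfolding ratio_constant_def using two_le_K min_sq_gap_pos max_sq_gap_pos by simp

lemma objective_le:
  assumes "0 < m" and w_ge: "\<forall>a<K. m \<le> w a"
  shows "objective K \<theta> w \<le> ereal (2 / (m * min_sq_gap K \<theta>))"
proof -
  have "(einv (w a) + einv (w (astar K \<theta>))) * ereal (1 / (gap K \<theta> a)\<^sup>2)
          \<le> ereal (2 / (m * min_sq_gap K \<theta>))"
    if a: "a \<in> suboptimal_arms K \<theta>" for a
  proof -
    have w: "m \<le> w a" "m \<le> w (astar K \<theta>)"
      using w_ge a astar_less by (auto simp: suboptimal_arms_def)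
    have "1 / w a \<le> 1 / m" "1 / w (astar K \<theta>) \<le> 1 / m"
      using w \<open>0 < m\<close> by (simp_all add: frac_le)
    then have "1 / w a + 1 / w (astar K \<theta>) \<le> 2 / m"
      by simp
    moreover have "1 / (gap K \<theta> a)\<^sup>2 \<le> 1 / min_sq_gap K \<theta>"
      using min_sq_gap_le[OF a] min_sq_gap_pos by (simp add: frac_le)
    ultimately have "(1 / w a + 1 / w (astar K \<theta>)) * (1 / (gap K \<theta> a)\<^sup>2)
                       \<le> (2 / m) * (1 / min_sq_gap K \<theta>)"
      using \<open>0 < m\<close> by (intro mult_mono) auto
    then show ?thesis
      using w \<open>0 < m\<close> by (simp add: einv_eq_ereal_divide)
  qed
  then show ?thesis
    unfolding objective_eq_Max using finite_suboptimal_arms suboptimal_arms_nonempty by simp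
qed

lemma objective_ge:
  assumes "\<forall>a<K. 0 \<le> w a \<and> w a \<le> 1"
  shows "ereal (1 / max_sq_gap K \<theta>) \<le> objective K \<theta> w"
proof -
  obtain a where a: "a \<in> suboptimal_arms K \<theta>"
    using suboptimal_arms_nonempty by blast
  then have weight_sum: "1 \<le> einv (w a) + einv (w (astar K \<theta>))"
    using assms astar_less einv_nonneg[of "w a"] one_le_einv[of "w (astar K \<theta>)"]
    by (simp add: suboptimal_arms_def add_increasing)
  have "ereal (1 / max_sq_gap K \<theta>) \<le> 1 * ereal (1 / (gap K \<theta> a)\<^sup>2)"
    using max_sq_gap_ge[OF a] gap_pos[OF a] by (simp add: frac_le)
  also have "\<dots> \<le> (einv (w a) + einv (w (astar K \<theta>))) * ereal (1 / (gap K \<theta> a)\<^sup>2)"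
    by (rule ereal_mult_right_mono[OF weight_sum]) simp
  also have "\<dots> \<le> objective K \<theta> w"
    unfolding objective_eq_Max using finite_suboptimal_arms a by simp
  finally show ?thesis .
qed

lemma Tstar_p_ge: "ereal (2 / max_sq_gap K \<theta>) \<le> Tstar_p K \<theta> p"
proof -
  have "ereal (1 / max_sq_gap K \<theta>) \<le> (INF w \<in> Sigma_p K p. objective K \<theta> w)"
    by (rule INF_greatest, rule objective_ge) (auto simp: Sigma_p_def)
  then show ?thesis
    unfolding Tstar_p_def using ereal_mult_left_mono[of _ _ 2] by fastforce
qed

lemma Tstar_p_le:
  assumes "w \<in> Sigma_p K p" and "0 < m" and "\<forall>a<K. m \<le> w a"
  shows "Tstar_p K \<theta> p \<le> ereal (4 / (m * min_sq_gap K \<theta>))"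
proof -
  have "(INF w \<in> Sigma_p K p. objective K \<theta> w) \<le> ereal (2 / (m * min_sq_gap K \<theta>))"
    using INF_lower[OF assms(1)] objective_le[OF assms(2,3)] by (rule order_trans)
  then show ?thesis
    unfolding Tstar_p_def using ereal_mult_left_mono[of _ _ 2] by fastforce
qed

lemma Tstar_finite: "Tstar K \<theta> < \<infinity>"
proof -
  have "uniform_fill K (\<lambda>_. 0) \<in> Sigma_p K (\<lambda>_. 0)"
    using two_le_K by (intro uniform_fill_in_Sigma_p) (auto simp: psum_def)
  moreover have "\<forall>a<K. 1 / real K \<le> uniform_fill K (\<lambda>_. 0) a"
    using uniform_fill_ge_slack[of K "\<lambda>_. 0"] by (simp add: psum_def)
  ultimately have "Tstar K \<theta> \<le> ereal (4 / (1 / real K * min_sq_gap K \<theta>))"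
    unfolding Tstar_def using two_le_K by (intro Tstar_p_le) auto
  then show ?thesis
    using order.strict_trans1 by fastforce
qed

lemma Tstar_real:
  obtains T where "Tstar K \<theta> = ereal T" and "2 / max_sq_gap K \<theta> \<le> T" and "0 < T"
proof -
  have lower: "ereal (2 / max_sq_gap K \<theta>) \<le> Tstar K \<theta>"
    unfolding Tstar_def by (rule Tstar_p_ge)
  obtain T where T: "Tstar K \<theta> = ereal T"
    using lower Tstar_finite by (cases "Tstar K \<theta>") auto
  have T_ge: "2 / max_sq_gap K \<theta> \<le> T"
    using lower T by simp
  moreover have "0 < 2 / max_sq_gap K \<theta>"
    using max_sq_gap_pos by simp
  ultimately show ?thesis
    using that[OF T T_ge] by linarith
qed

lemma one_le_Tstar_p_div_Tstar: "1 \<le> Tstar_p K \<theta> p / Tstar K \<theta>"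
proof -
  obtain T where "Tstar K \<theta> = ereal T" "0 < T"
    using Tstar_real by blast
  then show ?thesis
    using Tstar_le_Tstar_p[of K \<theta> p] by (subst ereal_le_divide_pos) auto
qed

lemma Tstar_p_div_Tstar_le:
  assumes "w \<in> Sigma_p K p" and "0 < m" and "\<forall>a<K. m \<le> w a"
  shows "Tstar_p K \<theta> p / Tstar K \<theta> \<le> ereal (ratio_constant K \<theta>) * ereal (1 / (real K * m))"
proof -
  obtain T where T: "Tstar K \<theta> = ereal T" "2 / max_sq_gap K \<theta> \<le> T" "0 < T"
    using Tstar_real by blast
  have "4 / (m * min_sq_gap K \<theta>) = (2 / max_sq_gap K \<theta>) * (ratio_constant K \<theta> * (1 / (real K * m)))"
    using two_le_K \<open>0 < m\<close> max_sq_gap_pos min_sq_gap_pos by (simp add: ratio_constant_def)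
  also have "\<dots> \<le> T * (ratio_constant K \<theta> * (1 / (real K * m)))"
    using T(2) ratio_constant_pos two_le_K \<open>0 < m\<close> by (intro mult_right_mono) auto
  finally have "Tstar_p K \<theta> p \<le> ereal T * (ereal (ratio_constant K \<theta>) * ereal (1 / (real K * m)))"
    using Tstar_p_le[OF assms] by (simp add: order_trans)
  then show ?thesis
    using T by (subst ereal_divide_le_pos) auto
qed

lemma Tstar_p_div_Tstar_le_slack:
  assumes p_nonneg: "\<forall>a<K. 0 \<le> p a" and "psum K p \<le> 1"
  shows "Tstar_p K \<theta> p / Tstar K \<theta> \<le> ereal (ratio_constant K \<theta>) * einv (1 - psum K p)"
proof (cases "psum K p = 1")
  case True
  then show ?thesis
    using ratio_constant_pos by (simp add: einv_def)
next
  case False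
  let ?m = "(1 - psum K p) / real K"
  have "0 < ?m"
    using False \<open>psum K p \<le> 1\<close> two_le_K by simp
  moreover have "uniform_fill K p \<in> Sigma_p K p"
    using two_le_K assms by (intro uniform_fill_in_Sigma_p) auto
  ultimately have "Tstar_p K \<theta> p / Tstar K \<theta> \<le> ereal (ratio_constant K \<theta>) * ereal (1 / (real K * ?m))"
    using Tstar_p_div_Tstar_le uniform_fill_ge_slack[OF p_nonneg] by blast
  then show ?thesis
    using False two_le_K by (simp add: einv_eq_ereal_divide)
qed

lemma Tstar_p_div_Tstar_le_pmin:
  assumes p_pos: "\<forall>a<K. 0 < p a" and "psum K p \<le> 1"
  shows "Tstar_p K \<theta> p / Tstar K \<theta> \<le> ereal (ratio_constant K \<theta>) * einv (real K * pmin K p)"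
proof -
  have "0 < pmin K p"
    using two_le_K p_pos by (intro pmin_pos) auto
  moreover have "uniform_fill K p \<in> Sigma_p K p"
    using two_le_K assms by (intro uniform_fill_in_Sigma_p) (auto intro: less_imp_le)
  ultimately have "Tstar_p K \<theta> p / Tstar K \<theta>
                     \<le> ereal (ratio_constant K \<theta>) * ereal (1 / (real K * pmin K p))"
    using Tstar_p_div_Tstar_le uniform_fill_ge_pmin[OF assms(2) p_pos] by blast
  then show ?thesis
    using \<open>0 < pmin K p\<close> two_le_K by (simp add: einv_eq_ereal_divide)
qed

end

theorem lemma1:
  fixes K :: nat and \<theta> :: "nat \<Rightarrow> real"
  assumes "K \<ge> 2" and "in_Theta K \<theta>"
  shows "\<exists>C::real. C > 0 \<and>
    (\<forall>p::nat \<Rightarrow> real. (\<forall>a<K. 0 \<le> p a \<and> p a \<le> 1) \<and> psum K p \<le> 1 \<longrightarrow>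
       1 \<le> Tstar_p K \<theta> p / Tstar K \<theta> \<and>
       Tstar_p K \<theta> p / Tstar K \<theta> \<le>
         ereal C * min (einv (1 - psum K p))
                       (if (\<forall>a<K. p a > 0) then einv (real K * pmin K p) else \<infinity>))"
proof (intro exI[of _ "ratio_constant K \<theta>"] conjI allI impI)
  show "0 < ratio_constant K \<theta>"
    using ratio_constant_pos[OF assms] .
  fix p :: "nat \<Rightarrow> real"
  assume p: "(\<forall>a<K. 0 \<le> p a \<and> p a \<le> 1) \<and> psum K p \<le> 1"
  show "1 \<le> Tstar_p K \<theta> p / Tstar K \<theta>"
    using one_le_Tstar_p_div_Tstar[OF assms] .
  have "Tstar_p K \<theta> p / Tstar K \<theta>
          \<le> ereal (ratio_constant K \<theta>) * (if \<forall>a<K. 0 < p a then einv (real K * pmin K p) else \<infinity>)"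
    using Tstar_p_div_Tstar_le_pmin[OF assms] ratio_constant_pos[OF assms] p by auto
  then show "Tstar_p K \<theta> p / Tstar K \<theta> \<le> ereal (ratio_constant K \<theta>) * min (einv (1 - psum K p))
               (if \<forall>a<K. 0 < p a then einv (real K * pmin K p) else \<infinity>)"
    using Tstar_p_div_Tstar_le_slack[OF assms] p by (simp add: min_def)
qed

end
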